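(* Both patterns $[12]$ and $[21]$ in $S_2$ admit bountiful width systems.
   Context: For $x=[x_1,\dots,x_N]\in S_N$ and a pattern $\sigma\in S_k$, an instance of $\sigma$ in $x$ is a tuple of positions $P=(P_1<\dots<P_k)$ with $(x_{P_1},\dots,x_{P_k})$ in the same relative order as $(\sigma(1),\dots,\sigma(k))$. A width system for $\sigma$ is a finite sequence of pairs $(a_1,b_1),\dots,(a_m,b_m)$ with $1\le a_l<b_l\le k$; it assigns to each instance $P$ the tuple $w(P)=(P_{b_1}-P_{a_1},\dots,P_{b_m}-P_{a_m})$. An instance $P$ is minimal in $x$ if $w(P)$ is lexicographically minimal among all instances of $\sigma$ in $x$; it is locally minimal if it is a minimal instance of $\sigma$ in the consecutive segment $[x_{P_1},x_{P_1+1},\dots,x_{P_k}]$. The width system is bountiful if for every $N$, every $x\in S_N$, every locally minimal instance $P$ of $\sigma$ in $x$ and every position $t$ with $P_1<t<P_k$, $t\notin\{P_1,\dots,P_k\}$, either $x_t<x_{P_j}$ for all $j$ with $P_j<t$, or $x_t>x_{P_j}$ for all $j$ with $P_j>t$. $\sigma$ admits a bountiful width system if some width system for $\sigma$ is bountiful. *)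

theory Defs
  imports Main
begin

text \<open>Conventions: a permutation x in S_N is the list [x_1,...,x_N] of its values,
  i.e. a list of length N whose set of entries is {1..N}.  Positions are 0-based list
  indices (only differences of positions enter the widths, so this is harmless).\<close>

definition is_perm :: "nat \<Rightarrow> nat list \<Rightarrow> bool" where
  "is_perm N x \<longleftrightarrow> length x = N \<and> set x = {1..N}"

definition is_instance :: "nat list \<Rightarrow> nat list \<Rightarrow> nat list \<Rightarrow> bool" where
  "is_instance \<sigma> x P \<longleftrightarrow>
     length P = length \<sigma> \<and> sorted_wrt (<) P \<and> (\<forall>p\<in>set P. p < length x) \<and>
     (\<forall>i<length \<sigma>. \<forall>j<length \<sigma>. x ! (P ! i) < x ! (P ! j) \<longleftrightarrow> \<sigma> ! i < \<sigma> ! j)"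

definition is_width_system :: "nat \<Rightarrow> (nat \<times> nat) list \<Rightarrow> bool" where
  "is_width_system k ws \<longleftrightarrow> (\<forall>(a,b)\<in>set ws. a < b \<and> b < k)"

definition width :: "(nat \<times> nat) list \<Rightarrow> nat list \<Rightarrow> nat list" where
  "width ws P = map (\<lambda>(a,b). P ! b - P ! a) ws"

definition is_minimal_instance :: "nat list \<Rightarrow> (nat \<times> nat) list \<Rightarrow> nat list \<Rightarrow> nat list \<Rightarrow> bool" where
  "is_minimal_instance \<sigma> ws x P \<longleftrightarrow>
     is_instance \<sigma> x P \<and> (\<forall>Q. is_instance \<sigma> x Q \<longrightarrow> lexordp_eq (width ws P) (width ws Q))"

text \<open>The consecutive segment [x_{P_1}, ..., x_{P_k}] and P re-indexed within it.\<close>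
definition is_locally_minimal :: "nat list \<Rightarrow> (nat \<times> nat) list \<Rightarrow> nat list \<Rightarrow> nat list \<Rightarrow> bool" where
  "is_locally_minimal \<sigma> ws x P \<longleftrightarrow>
     is_instance \<sigma> x P \<and> P \<noteq> [] \<and>
     is_minimal_instance \<sigma> ws (take (last P - hd P + 1) (drop (hd P) x)) (map (\<lambda>p. p - hd P) P)"

definition bountiful :: "nat list \<Rightarrow> (nat \<times> nat) list \<Rightarrow> bool" where
  "bountiful \<sigma> ws \<longleftrightarrow>
     (\<forall>N x P t. is_perm N x \<longrightarrow> is_locally_minimal \<sigma> ws x P \<longrightarrow>
        hd P < t \<longrightarrow> t < last P \<longrightarrow> t \<notin> set P \<longrightarrow>
        (\<forall>j<length P. P ! j < t \<longrightarrow> x ! t < x ! (P ! j)) \<or>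
        (\<forall>j<length P. t < P ! j \<longrightarrow> x ! (P ! j) < x ! t))"

definition admits_bountiful_width_system :: "nat list \<Rightarrow> bool" where
  "admits_bountiful_width_system \<sigma> \<longleftrightarrow>
     (\<exists>ws. is_width_system (length \<sigma>) ws \<and> bountiful \<sigma> ws)"

end

theory Submission
  imports Defs
begin

text \<open>Take the width system consisting of the single width P_2 - P_1. If (p, q) is a
  locally minimal instance of a pattern of length two and p < t < q, then (p, t) cannot be an
  instance, as it would be narrower inside the same segment. Since the values are distinct, for
  the pattern 12 this forces x_t < x_p, and for 21 it forces x_t > x_p > x_q; in either case one
  of the two alternatives of bountifulness holds.\<close>

definition segment :: "nat \<Rightarrow> nat \<Rightarrow> 'a list \<Rightarrow> 'a list" where
  "segment lo hi x = take (hi - lo + 1) (drop lo x)"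

lemma nth_segment:
  assumes "lo \<le> i" "i \<le> hi" "hi < length x"
  shows "segment lo hi x ! (i - lo) = x ! i"
  using assms by (simp add: segment_def)

lemma is_instance_segment:
  assumes inst: "is_instance \<sigma> x Q" and bounds: "\<forall>i\<in>set Q. lo \<le> i \<and> i \<le> hi"
    and "hi < length x"
  shows "is_instance \<sigma> (segment lo hi x) (map (\<lambda>i. i - lo) Q)"
proof -
  have "sorted_wrt (<) (map (\<lambda>i. i - lo) Q)"
    using inst bounds unfolding is_instance_def sorted_wrt_map
    by (auto elim!: sorted_wrt_mono_rel[rotated])
  moreover have "segment lo hi x ! (Q ! i - lo) = x ! (Q ! i)" if "i < length \<sigma>" for i
    using inst bounds assms(3) that by (intro nth_segment) (auto simp: is_instance_def)
  ultimately show ?thesis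
    using inst bounds assms(3) by (auto simp: is_instance_def segment_def)
qed

lemma width_shift:
  assumes "is_width_system (length P) ws" and "\<forall>i\<in>set P. lo \<le> i"
  shows "width ws (map (\<lambda>i. i - lo) P) = width ws P"
  using assms by (fastforce simp: width_def is_width_system_def)

lemma sorted_hd_le: "sorted xs \<Longrightarrow> i \<in> set xs \<Longrightarrow> hd xs \<le> i"
  by (cases xs) auto

lemma locally_minimal_width_le:
  assumes ws: "is_width_system (length \<sigma>) ws" and lm: "is_locally_minimal \<sigma> ws x P"
    and inst: "is_instance \<sigma> x Q" and span: "\<forall>i\<in>set Q. hd P \<le> i \<and> i \<le> last P"
  shows "lexordp_eq (width ws P) (width ws Q)"
proof -
  let ?shift = "map (\<lambda>i. i - hd P)"
  have P: "is_instance \<sigma> x P" and "P \<noteq> []"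
    and min: "is_minimal_instance \<sigma> ws (segment (hd P) (last P) x) (?shift P)"
    using lm by (auto simp: is_locally_minimal_def segment_def)
  have "last P < length x"
    using P \<open>P \<noteq> []\<close> by (simp add: is_instance_def)
  then have "is_instance \<sigma> (segment (hd P) (last P) x) (?shift Q)"
    using inst span by (intro is_instance_segment)
  with min have "lexordp_eq (width ws (?shift P)) (width ws (?shift Q))"
    by (simp add: is_minimal_instance_def)
  moreover have "length P = length \<sigma>" "length Q = length \<sigma>"
    using P inst by (simp_all add: is_instance_def)
  ultimately show ?thesis
    using ws span P by (simp add: width_shift sorted_hd_le strict_sorted_imp_sorted is_instance_def)
qed

lemma is_instance_pair_iff:
  "is_instance [a, b] x [p, q] \<longleftrightarrow>
     p < q \<and> q < length x \<and> (x ! p < x ! q \<longleftrightarrow> a < b) \<and> (x ! q < x ! p \<longleftrightarrow> b < a)"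
  by (auto simp: is_instance_def All_less_Suc)

lemma is_instance_pairE:
  assumes "is_instance [a, b] x P"
  obtains p q where "P = [p, q]"
  using assms unfolding is_instance_def by (auto simp: length_Suc_conv)

lemma locally_minimal_pair_no_inner_instance:
  assumes "is_locally_minimal [a, b] [(0, 1)] x [p, q]" and "p < t" and "t < q"
  shows "\<not> is_instance [a, b] x [p, t]"
proof
  assume "is_instance [a, b] x [p, t]"
  with assms have "lexordp_eq (width [(0, 1)] [p, q]) (width [(0, 1)] [p, t])"
    by (intro locally_minimal_width_le) (auto simp: is_width_system_def)
  then have "q - p \<le> t - p"
    by (auto simp: width_def)
  with assms show False
    by linarith
qed

lemma is_perm_distinct: "is_perm N x \<Longrightarrow> distinct x"
  unfolding is_perm_def by (metis card_atLeastAtMost card_distinct diff_Suc_1)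

lemma bountiful_pair:
  assumes "a \<noteq> b"
  shows "bountiful [a, b] [(0, 1)]"
  unfolding bountiful_def
proof (intro allI impI)
  fix N x P t
  assume perm: "is_perm N x" and lm: "is_locally_minimal [a, b] [(0, 1)] x P"
    and "hd P < t" "t < last P" "t \<notin> set P"
  from lm obtain p q where P: "P = [p, q]"
    unfolding is_locally_minimal_def by (blast elim: is_instance_pairE)
  with \<open>hd P < t\<close> \<open>t < last P\<close> have t: "p < t" "t < q"
    by simp_all
  have pq: "q < length x" "x ! q < x ! p \<longleftrightarrow> b < a"
    using lm P by (simp_all add: is_locally_minimal_def is_instance_pair_iff)
  have "x ! t \<noteq> x ! p"
    using is_perm_distinct[OF perm] t pq by (simp add: nth_eq_iff_index_eq)
  moreover have "\<not> is_instance [a, b] x [p, t]"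
    using locally_minimal_pair_no_inner_instance lm P t by blast
  ultimately have "x ! t < x ! p \<longleftrightarrow> a < b"
    using t pq assms by (auto simp: is_instance_pair_iff)
  then show "(\<forall>j<length P. P ! j < t \<longrightarrow> x ! t < x ! (P ! j)) \<or>
        (\<forall>j<length P. t < P ! j \<longrightarrow> x ! (P ! j) < x ! t)"
    using P t pq assms by (auto simp: All_less_Suc)
qed

theorem mainTheorem14:
  shows "admits_bountiful_width_system [1, 2] \<and> admits_bountiful_width_system [2, 1]"
  using bountiful_pair[of 1 2] bountiful_pair[of 2 1]
  unfolding admits_bountiful_width_system_def
  by (auto simp: is_width_system_def intro!: exI[of _ "[(0, 1)]"])

end
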